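(* For every integer $d\ge 1$, the Euclidean space $\mathbb R^d$ and the $d$-dimensional real hyperbolic space $\mathbb H^d$ are almost-isometry unique.
   Context: For $\lambda>1$, an injection $f$ between metric spaces is $\lambda$-bi-Lipschitz if for all distinct $a,b$ in its domain, $d(f(a),f(b))<\lambda d(a,b)$ and $d(a,b)<\lambda d(f(a),f(b))$. Two metric spaces $X,Y$ are almost isometric if for every $\lambda>1$ there is a $\lambda$-bi-Lipschitz bijection from $X$ onto $Y$. A metric space $X$ is almost-isometry unique if every metric space almost isometric to $X$ is isometric to $X$. *)

theory Defs
  imports "HOL-Analysis.Analysis"
begin

definition bi_lipschitz :: "real \<Rightarrow> ('a \<Rightarrow> 'b) \<Rightarrow> 'a set \<Rightarrow> ('a \<Rightarrow> 'a \<Rightarrow> real)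
    \<Rightarrow> ('b \<Rightarrow> 'b \<Rightarrow> real) \<Rightarrow> bool" where
  "bi_lipschitz lam f X dX dY \<longleftrightarrow> inj_on f X \<and>
     (\<forall>a\<in>X. \<forall>b\<in>X. a \<noteq> b \<longrightarrow>
        dY (f a) (f b) < lam * dX a b \<and> dX a b < lam * dY (f a) (f b))"

definition almost_isometric :: "'a set \<Rightarrow> ('a \<Rightarrow> 'a \<Rightarrow> real) \<Rightarrow> 'b set \<Rightarrow> ('b \<Rightarrow> 'b \<Rightarrow> real) \<Rightarrow> bool" where
  "almost_isometric X dX Y dY \<longleftrightarrow>
     (\<forall>lam > 1. \<exists>f. bij_betw f X Y \<and> bi_lipschitz lam f X dX dY)"

definition isometric :: "'a set \<Rightarrow> ('a \<Rightarrow> 'a \<Rightarrow> real) \<Rightarrow> 'b set \<Rightarrow> ('b \<Rightarrow> 'b \<Rightarrow> real) \<Rightarrow> bool" where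
  "isometric X dX Y dY \<longleftrightarrow>
     (\<exists>f. bij_betw f X Y \<and> (\<forall>a\<in>X. \<forall>b\<in>X. dY (f a) (f b) = dX a b))"

text \<open>Almost-isometry uniqueness, quantifying over all metric spaces whose points
  live in the type 'b. Since the type 'b is left universally quantified in the
  theorem, this covers all metric spaces.\<close>
definition almost_isometry_unique :: "'b itself \<Rightarrow> 'a set \<Rightarrow> ('a \<Rightarrow> 'a \<Rightarrow> real) \<Rightarrow> bool" where
  "almost_isometry_unique (_::'b itself) X dX \<longleftrightarrow>
     (\<forall>(Y::'b set) dY. Metric_space Y dY \<and> almost_isometric X dX Y dY \<longrightarrow> isometric X dX Y dY)"

text \<open>Real hyperbolic space of dimension CARD('n): Poincare ball model.\<close>
definition hyperbolic_space :: "(real ^ 'n) set" where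
  "hyperbolic_space = ball 0 1"

definition hyperbolic_dist :: "real ^ 'n \<Rightarrow> real ^ 'n \<Rightarrow> real" where
  "hyperbolic_dist x y =
     arcosh (1 + 2 * (norm (x - y))\<^sup>2 / ((1 - (norm x)\<^sup>2) * (1 - (norm y)\<^sup>2)))"

end

(*
  Let X be a space (with a distance function d) whose isometries act transitively and whose
  bounded sets are relatively compact and totally bounded, and let G n be
  (1 + 1/(n+1))-bi-Lipschitz bijections onto a metric space Y. Composing with isometries of X
  we may assume that every G n sends a base point to the same y0. Then G n x lies in the closed
  ball of radius 2 d(base, x) about y0, and these balls are compact in Y, so by Tychonoff the
  maps G n have a cluster point P in the product of these balls. Approximating P on finitely
  many points by some G n with n large shows that P preserves distances, and total boundedness
  of the balls of X shows that P is onto. Translations act transitively on R^d, Moebius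
  additions act transitively on the Poincare ball, and hyperbolic balls are Euclidean balls
  on which the hyperbolic distance is uniformly continuous.
*)

theory Submission
  imports Defs
begin

lemma bi_lipschitz_le:
  assumes "bi_lipschitz lam f X dX dY" "a \<in> X" "b \<in> X" "dX a a = 0" "dY (f a) (f a) = 0"
  shows "dY (f a) (f b) \<le> lam * dX a b" "dX a b \<le> lam * dY (f a) (f b)"
  using assms unfolding bi_lipschitz_def by (cases "a = b"; force)+

lemma bi_lipschitz_comp_isometry:
  assumes f: "bi_lipschitz lam f X dX dY" and g: "bij_betw g X X"
    and iso: "\<forall>a\<in>X. \<forall>b\<in>X. dX (g a) (g b) = dX a b"
  shows "bi_lipschitz lam (f \<circ> g) X dX dY"
  unfolding bi_lipschitz_def
proof (intro conjI ballI impI)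
  show "inj_on (f \<circ> g) X"
    using f g by (auto simp: bi_lipschitz_def bij_betw_def intro: comp_inj_on)
  fix a b assume ab: "a \<in> X" "b \<in> X" "a \<noteq> b"
  then have "g a \<in> X" "g b \<in> X" "g a \<noteq> g b"
    using g by (auto simp: bij_betw_def inj_on_def)
  then have "dY (f (g a)) (f (g b)) < lam * dX (g a) (g b)"
    and "dX (g a) (g b) < lam * dY (f (g a)) (f (g b))"
    using f unfolding bi_lipschitz_def by blast+
  then show "dY ((f \<circ> g) a) ((f \<circ> g) b) < lam * dX a b"
    and "dX a b < lam * dY ((f \<circ> g) a) ((f \<circ> g) b)"
    using iso ab by simp_all
qed

lemma le_of_le_add_small_multiple:
  fixes u v c :: real
  assumes "\<And>e. 0 < e \<Longrightarrow> e < 1 \<Longrightarrow> u \<le> v + e * c"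
  shows "u \<le> v"
proof (rule field_le_epsilon)
  fix t :: real assume "0 < t"
  define e where "e = min (1/2) (t / (\<bar>c\<bar> + 1))"
  have e: "0 < e" "e < 1" using \<open>0 < t\<close> by (auto simp: e_def)
  have "e * c \<le> e * (\<bar>c\<bar> + 1)" using e by (intro mult_left_mono) auto
  also have "\<dots> \<le> t / (\<bar>c\<bar> + 1) * (\<bar>c\<bar> + 1)" by (intro mult_right_mono) (auto simp: e_def)
  also have "\<dots> = t" by simp
  finally show "u \<le> v + t" using assms[OF e] by linarith
qed

lemma compact_space_cluster_point:
  fixes \<Phi> :: "nat \<Rightarrow> 'a"
  assumes "compact_space T" "range \<Phi> \<subseteq> topspace T"
  obtains P where "\<And>N. P \<in> T closure_of (\<Phi> ` {N..})"
proof -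
  have "(\<Inter>N. T closure_of (\<Phi> ` {N..})) \<noteq> {}"
    using assms(2)
    by (intro compact_space_imp_nest[OF assms(1), of "\<lambda>N. T closure_of (\<Phi> ` {N..})"])
       (auto simp: closure_of_eq_empty_gen disjnt_iff decseq_def intro!: closure_of_mono)
  then show ?thesis using that by blast
qed

lemma (in Metric_space) closure_of_product_approx:
  assumes "P \<in> product_topology (\<lambda>i. subtopology mtopology (S i)) I closure_of F"
    and "finite A" "A \<subseteq> I" "0 < e"
  obtains f where "f \<in> F" "\<And>a. a \<in> A \<Longrightarrow> d (f a) (P a) < e"
proof -
  let ?T = "product_topology (\<lambda>i. subtopology mtopology (S i)) I"
  define U where "U a = {h \<in> topspace ?T. h a \<in> mball (P a) e}" for a
  have "openin ?T (U a)" if "a \<in> I" for a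
    unfolding U_def
    by (rule openin_continuous_map_preimage[OF continuous_map_into_fulltopology
          [OF continuous_map_product_projection[OF that]]]) simp
  then have "openin ?T ((\<Inter>a\<in>A. U a) \<inter> topspace ?T)"
    using assms(2,3) by blast
  moreover have "P \<in> topspace ?T"
    using assms(1) unfolding in_closure_of by blast
  then have "P \<in> (\<Inter>a\<in>A. U a) \<inter> topspace ?T"
    using assms(3,4) by (auto simp: U_def PiE_iff subset_iff)
  ultimately obtain f where "f \<in> F" "f \<in> (\<Inter>a\<in>A. U a)"
    using assms(1) unfolding in_closure_of by blast
  then show ?thesis
    using that by (auto simp: U_def commute)
qed

lemma inverse_Suc_antimono: "m \<le> n \<Longrightarrow> inverse (real (Suc n)) \<le> inverse (real (Suc m))"
  by (rule le_imp_inverse_le) auto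

section \<open>Limits of almost isometries\<close>

locale homogeneous_proper_space =
  fixes X :: "'a set" and d :: "'a \<Rightarrow> 'a \<Rightarrow> real" and base :: 'a
  assumes base_in: "base \<in> X"
    and zero_self: "x \<in> X \<Longrightarrow> d x x = 0"
    and transitive_isometries:
      "p \<in> X \<Longrightarrow> \<exists>g. bij_betw g X X \<and> g base = p \<and> (\<forall>a\<in>X. \<forall>b\<in>X. d (g a) (g b) = d a b)"
    and bounded_seq_convergent_subseq:
      "(\<And>n. s n \<in> X) \<Longrightarrow> (\<And>n. d base (s n) \<le> r) \<Longrightarrow>
        \<exists>x\<in>X. \<exists>\<sigma>::nat\<Rightarrow>nat. strict_mono \<sigma> \<and> (\<forall>e>0. \<exists>N. \<forall>n\<ge>N. d (s (\<sigma> n)) x < e)"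
    and bounded_finite_net:
      "0 < e \<Longrightarrow> \<exists>F. finite F \<and> F \<subseteq> X \<and> (\<forall>x\<in>X. d base x \<le> r \<longrightarrow> (\<exists>a\<in>F. d a x < e))"

locale almost_isometry_sequence =
  homogeneous_proper_space X dX base + Y: Metric_space Y dY
  for X :: "'a set" and dX base and Y :: "'b set" and dY +
  fixes G :: "nat \<Rightarrow> 'a \<Rightarrow> 'b" and y0 :: 'b
  assumes G_bij: "bij_betw (G n) X Y"
    and G_bi_lipschitz: "bi_lipschitz (1 + inverse (real (Suc n))) (G n) X dX dY"
    and G_base: "G n base = y0"
begin

lemma G_in: "x \<in> X \<Longrightarrow> G n x \<in> Y"
  using G_bij bij_betwE by blast

lemma y0_in: "y0 \<in> Y"
  using G_in[OF base_in] G_base by metis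

lemma G_image: "G n ` X = Y"
  using G_bij by (simp add: bij_betw_def)

lemma G_le:
  assumes "a \<in> X" "b \<in> X"
  shows "dY (G n a) (G n b) \<le> (1 + inverse (real (Suc n))) * dX a b"
    and "dX a b \<le> (1 + inverse (real (Suc n))) * dY (G n a) (G n b)"
  using bi_lipschitz_le[OF G_bi_lipschitz assms zero_self[OF assms(1)]] G_in assms by auto

lemma dX_nonneg:
  assumes "a \<in> X" "b \<in> X"
  shows "0 \<le> dX a b"
proof -
  have "dY (G 0 a) (G 0 b) \<le> 2 * dX a b"
    using G_le(1)[OF assms, of 0] by simp
  then show ?thesis
    using Y.nonneg[of "G 0 a" "G 0 b"] by linarith
qed

lemma dX_pos:
  assumes "a \<in> X" "b \<in> X" "a \<noteq> b"
  shows "0 < dX a b"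
proof -
  have "G 0 a \<noteq> G 0 b"
    using G_bij assms by (auto simp: bij_betw_def inj_on_def)
  then have "0 < dY (G 0 a) (G 0 b)"
    using G_in assms by simp
  then show ?thesis
    using G_le(1)[OF assms(1,2), of 0] by (simp add: zero_less_mult_iff)
qed

lemma G_le_2:
  assumes "a \<in> X" "b \<in> X"
  shows "dY (G n a) (G n b) \<le> 2 * dX a b" "dX a b \<le> 2 * dY (G n a) (G n b)"
proof -
  have c: "1 + inverse (real (Suc n)) \<le> 2"
    using inverse_Suc_antimono[of 0 n] by simp
  show "dY (G n a) (G n b) \<le> 2 * dX a b"
    using G_le(1)[OF assms, of n] mult_right_mono[OF c dX_nonneg[OF assms]] by linarith
  show "dX a b \<le> 2 * dY (G n a) (G n b)"
    using G_le(2)[OF assms, of n] mult_right_mono[OF c Y.nonneg[of "G n a" "G n b"]] by linarith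
qed

lemma compactin_mcball: "compactin Y.mtopology (Y.mcball y0 r)"
  unfolding Y.compactin_sequentially
proof (intro conjI allI impI)
  show "Y.mcball y0 r \<subseteq> Y" by (rule Y.mcball_subset_mspace)
  fix \<sigma> :: "nat \<Rightarrow> 'b" assume "range \<sigma> \<subseteq> Y.mcball y0 r"
  then have \<sigma>: "\<sigma> n \<in> Y" "dY y0 (\<sigma> n) \<le> r" for n
    unfolding image_subset_iff by simp_all
  define s where "s n = inv_into X (G 0) (\<sigma> n)" for n
  have s: "s n \<in> X" "G 0 (s n) = \<sigma> n" for n
    unfolding s_def using \<sigma>(1)[of n] by (simp_all add: G_image inv_into_into f_inv_into_f)
  have "dX base (s n) \<le> 2 * r" for n
    using G_le_2(2)[OF base_in s(1)[of n], of 0] \<sigma>(2)[of n] by (simp add: s(2) G_base)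
  from bounded_seq_convergent_subseq[of s, OF s(1) this]
  obtain x and \<rho> :: "nat \<Rightarrow> nat" where x: "x \<in> X" "strict_mono \<rho>"
      "\<forall>e>0. \<exists>N. \<forall>n\<ge>N. dX (s (\<rho> n)) x < e"
    by blast
  have "limitin Y.mtopology (\<sigma> \<circ> \<rho>) (G 0 x) sequentially"
    unfolding Y.limit_metric_sequentially
  proof (intro conjI allI impI)
    show "G 0 x \<in> Y" using G_in[OF x(1)] .
    fix e :: real assume "0 < e"
    then obtain N where N: "\<forall>n\<ge>N. dX (s (\<rho> n)) x < e / 2"
      using x(3) half_gt_zero by blast
    have "dY (\<sigma> (\<rho> n)) (G 0 x) < e" if "n \<ge> N" for n
      using G_le_2(1)[OF s(1)[of "\<rho> n"] x(1), of 0] N[rule_format, OF that] by (simp add: s(2))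
    then show "\<exists>N. \<forall>n\<ge>N. (\<sigma> \<circ> \<rho>) n \<in> Y \<and> dY ((\<sigma> \<circ> \<rho>) n) (G 0 x) < e"
      using \<sigma>(1) by (intro exI[of _ N]) auto
  qed
  moreover have "G 0 x \<in> Y.mcball y0 r"
  proof (rule limitin_closedin[OF calculation Y.closedin_mcball])
    show "\<forall>\<^sub>F n in sequentially. (\<sigma> \<circ> \<rho>) n \<in> Y.mcball y0 r"
      by (rule always_eventually) (simp add: \<sigma> y0_in)
  qed simp
  ultimately show "\<exists>l \<rho>. l \<in> Y.mcball y0 r \<and> strict_mono \<rho> \<and>
      limitin Y.mtopology (\<sigma> \<circ> \<rho>) l sequentially"
    using x(2) by (intro exI[of _ "G 0 x"] exI[of _ \<rho>]) blast
qed

end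

locale almost_isometry_limit = almost_isometry_sequence +
  fixes P :: "'a \<Rightarrow> 'b"
  assumes P_in_mcball: "x \<in> X \<Longrightarrow> P x \<in> Y.mcball y0 (2 * dX base x)"
    and G_approx_P: "finite A \<Longrightarrow> A \<subseteq> X \<Longrightarrow> 0 < e \<Longrightarrow> \<exists>n\<ge>N. \<forall>a\<in>A. dY (G n a) (P a) < e"
begin

lemma P_in: "x \<in> X \<Longrightarrow> P x \<in> Y"
  using P_in_mcball by auto

lemma P_base: "P base = y0"
proof -
  have "dY y0 (P base) \<le> 0"
    using P_in_mcball[OF base_in] by (simp add: zero_self[OF base_in])
  then show ?thesis
    using Y.nonneg[of y0 "P base"] P_in[OF base_in] y0_in by simp
qed

lemma P_dist:
  assumes "a \<in> X" "b \<in> X"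
  shows "dY (P a) (P b) = dX a b"
proof -
  let ?u = "dY (P a) (P b)" and ?v = "dX a b"
  have bounds: "?u \<le> ?v + e * (2 + ?v) \<and> ?v \<le> ?u + e * (?u + 4)" if e: "0 < e" "e < 1" for e
  proof -
    obtain N where N: "inverse (real (Suc N)) < e"
      using reals_Archimedean e(1) by blast
    obtain n where n: "N \<le> n" "dY (G n a) (P a) < e" "dY (G n b) (P b) < e"
      using G_approx_P[of "{a, b}" e N] assms e(1) by auto
    have l: "1 + inverse (real (Suc n)) \<le> 1 + e"
      using inverse_Suc_antimono[OF n(1)] N by linarith
    let ?w = "dY (G n a) (G n b)"
    have "?u \<le> dY (P a) (G n a) + dY (G n a) (P b)"
      using Y.triangle G_in P_in assms by blast
    also have "dY (G n a) (P b) \<le> ?w + dY (G n b) (P b)"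
      using Y.triangle G_in P_in assms by blast
    finally have u: "?u < ?w + 2 * e"
      using n(2,3) Y.commute[of "P a" "G n a"] by linarith
    have "?w \<le> dY (G n a) (P a) + dY (P a) (G n b)"
      using Y.triangle G_in P_in assms by blast
    also have "dY (P a) (G n b) \<le> ?u + dY (P b) (G n b)"
      using Y.triangle G_in P_in assms by blast
    finally have w: "?w < ?u + 2 * e"
      using n(2,3) Y.commute[of "P b" "G n b"] by linarith
    have "?w \<le> (1 + e) * ?v"
      using G_le(1)[OF assms, of n] mult_right_mono[OF l dX_nonneg[OF assms]] by linarith
    moreover have "?v \<le> (1 + e) * ?w"
      using G_le(2)[OF assms, of n] mult_right_mono[OF l Y.nonneg[of "G n a" "G n b"]] by linarith
    moreover have "(1 + e) * ?w \<le> (1 + e) * (?u + 2 * e)"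
      using w e by (intro mult_left_mono) auto
    moreover have "e * e \<le> e"
      using e by (simp add: mult_le_cancel_left1)
    ultimately show ?thesis
      using u by (simp add: algebra_simps)
  qed
  have "?u \<le> ?v" "?v \<le> ?u"
    by (rule le_of_le_add_small_multiple; use bounds in blast)+
  then show ?thesis by simp
qed

lemma P_inj: "inj_on P X"
proof (rule inj_onI)
  fix a b assume "a \<in> X" "b \<in> X" "P a = P b"
  then have "dX a b = 0"
    using P_dist[of a b] P_in[of b] by simp
  then show "a = b"
    using dX_pos[of a b] \<open>a \<in> X\<close> \<open>b \<in> X\<close> by linarith
qed

lemma P_image_dense:
  assumes "y \<in> Y" "0 < e"
  shows "\<exists>x\<in>X. dX base x < dY y0 y + e \<and> dY (P x) y < e"
proof -
  obtain F where F: "finite F" "F \<subseteq> X"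
      "\<forall>x\<in>X. dX base x \<le> 2 * dY y0 y \<longrightarrow> (\<exists>a\<in>F. dX a x < e / 4)"
    using bounded_finite_net[of "e / 4" "2 * dY y0 y"] assms(2) by auto
  obtain n where n: "\<forall>a\<in>F. dY (G n a) (P a) < e / 4"
    using G_approx_P[OF F(1,2), of "e / 4" 0] assms(2) by auto
  have "y \<in> G n ` X"
    using assms(1) by (simp add: G_image)
  then obtain x where x: "x \<in> X" "G n x = y"
    by blast
  have "dX base x \<le> 2 * dY y0 y"
    using G_le_2(2)[OF base_in x(1), of n] by (simp add: x(2) G_base)
  then obtain a where a: "a \<in> F" "dX a x < e / 4"
    using F(3) x(1) by blast
  have aX: "a \<in> X"
    using a(1) F(2) by blast
  have "dY (P a) y \<le> dY (P a) (G n a) + dY (G n a) (G n x)"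
    using Y.triangle[of "P a" "G n a" y] P_in[OF aX] G_in[OF aX] assms(1) x(2) by simp
  also have "\<dots> < e"
    using n[rule_format, OF a(1)] a(2) assms(2) G_le_2(1)[OF aX x(1), of n]
      Y.commute[of "P a" "G n a"]
    by linarith
  finally have close: "dY (P a) y < e" .
  have "dX base a = dY y0 (P a)"
    using P_dist[OF base_in aX] by (simp add: P_base)
  also have "\<dots> \<le> dY y0 y + dY y (P a)"
    using Y.triangle y0_in assms(1) P_in[OF aX] by blast
  finally have "dX base a < dY y0 y + e"
    using close Y.commute[of y "P a"] by linarith
  then show ?thesis
    using close aX by blast
qed

lemma P_surj:
  assumes "y \<in> Y"
  shows "y \<in> P ` X"
proof -
  have "\<forall>k. \<exists>x. x \<in> X \<and> dX base x < dY y0 y + inverse (real (Suc k))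
      \<and> dY (P x) y < inverse (real (Suc k))"
    using P_image_dense[OF assms] by (metis inverse_positive_iff_positive of_nat_0_less_iff zero_less_Suc)
  then obtain s where s: "\<And>k. s k \<in> X" "\<And>k. dX base (s k) < dY y0 y + inverse (real (Suc k))"
      "\<And>k. dY (P (s k)) y < inverse (real (Suc k))"
    by metis
  have "dX base (s k) \<le> dY y0 y + 1" for k
    using s(2)[of k] inverse_Suc_antimono[of 0 k] by simp
  from bounded_seq_convergent_subseq[of s, OF s(1) this]
  obtain x and \<rho> :: "nat \<Rightarrow> nat" where x: "x \<in> X" "strict_mono \<rho>"
      "\<forall>e>0. \<exists>N. \<forall>n\<ge>N. dX (s (\<rho> n)) x < e"
    by blast
  have "limitin Y.mtopology (P \<circ> s \<circ> \<rho>) (P x) sequentially"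
    unfolding Y.limit_metric_sequentially
    using x(3) P_in[OF x(1)] P_in[OF s(1)] P_dist[OF s(1) x(1)] by simp
  moreover have "limitin Y.mtopology (P \<circ> s) y sequentially"
    unfolding Y.limit_metric_sequentially
  proof (intro conjI allI impI)
    fix e :: real assume "0 < e"
    then obtain N where N: "inverse (real (Suc N)) < e"
      using reals_Archimedean by blast
    have "dY (P (s n)) y < e" if "N \<le> n" for n
      using s(3)[of n] N inverse_Suc_antimono[OF that] by linarith
    then show "\<exists>N. \<forall>n\<ge>N. (P \<circ> s) n \<in> Y \<and> dY ((P \<circ> s) n) y < e"
      using P_in[OF s(1)] by (intro exI[of _ N]) simp
  qed (fact assms)
  then have "limitin Y.mtopology (P \<circ> s \<circ> \<rho>) y sequentially"
    by (rule limitin_subsequence[OF x(2)])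
  ultimately have "P x = y"
    by (rule limitin_Hausdorff_unique) (simp_all add: Y.Hausdorff_space_mtopology)
  then show ?thesis
    using x(1) by blast
qed

lemma P_bij: "bij_betw P X Y"
proof -
  have "P ` X = Y"
    using P_in P_surj by (auto simp: image_subset_iff)
  then show ?thesis
    unfolding bij_betw_def using P_inj by simp
qed

end

context almost_isometry_sequence
begin

lemma almost_isometry_limit_exists:
  obtains P where "almost_isometry_limit X dX base Y dY G y0 P"
proof -
  let ?T = "product_topology (\<lambda>x. subtopology Y.mtopology (Y.mcball y0 (2 * dX base x))) X"
  have topspace_T: "topspace ?T = (\<Pi>\<^sub>E x\<in>X. Y.mcball y0 (2 * dX base x))"
    by (simp add: Y.mcball_subset_mspace inf.absorb2)
  have "compact_space ?T"
    unfolding compact_space_product_topology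
    using compactin_mcball compact_space_subtopology by blast
  moreover have "G n x \<in> Y.mcball y0 (2 * dX base x)" if "x \<in> X" for n x
    using G_le_2(1)[OF base_in that, of n] G_in[OF that] y0_in by (simp add: G_base)
  then have "range (\<lambda>n. restrict (G n) X) \<subseteq> topspace ?T"
    unfolding topspace_T by auto
  ultimately obtain P where P: "\<And>N. P \<in> ?T closure_of ((\<lambda>n. restrict (G n) X) ` {N..})"
    by (rule compact_space_cluster_point) blast
  have "P \<in> topspace ?T"
    using P[of 0] unfolding in_closure_of by blast
  then have P_mcball: "P x \<in> Y.mcball y0 (2 * dX base x)" if "x \<in> X" for x
    using that unfolding topspace_T by (simp add: PiE_iff)
  have G_approx_P: "\<exists>n\<ge>N. \<forall>a\<in>A. dY (G n a) (P a) < e"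
    if A: "finite A" "A \<subseteq> X" and "0 < e" for A e N
  proof -
    obtain n where n: "N \<le> n" "\<And>a. a \<in> A \<Longrightarrow> dY (restrict (G n) X a) (P a) < e"
      using Y.closure_of_product_approx[OF P A \<open>0 < e\<close>] by blast
    have "dY (G n a) (P a) < e" if "a \<in> A" for a
      using n(2)[OF that] subsetD[OF A(2) that] by simp
    then show ?thesis
      using n(1) by blast
  qed
  have "almost_isometry_limit X dX base Y dY G y0 P"
    by (intro almost_isometry_limit.intro almost_isometry_sequence_axioms
        almost_isometry_limit_axioms.intro P_mcball G_approx_P)
  then show ?thesis
    by (rule that)
qed

end

context homogeneous_proper_space
begin

lemma normalized_almost_isometries:
  assumes Y: "Metric_space Y dY" and AI: "almost_isometric X d Y dY"
  obtains G y0 where "almost_isometry_sequence X d base Y dY G y0"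
proof -
  interpret Y: Metric_space Y dY by fact
  have "\<forall>n. \<exists>f. bij_betw f X Y \<and> bi_lipschitz (1 + inverse (real (Suc n))) f X d dY"
    using AI unfolding almost_isometric_def by simp
  then obtain F where F: "\<And>n. bij_betw (F n) X Y"
      "\<And>n. bi_lipschitz (1 + inverse (real (Suc n))) (F n) X d dY"
    by metis
  define y0 where "y0 = F 0 base"
  have y0: "y0 \<in> Y"
    unfolding y0_def using F(1) base_in bij_betwE by blast
  have "\<exists>G. bij_betw G X Y \<and> bi_lipschitz (1 + inverse (real (Suc n))) G X d dY \<and> G base = y0"
    for n
  proof -
    let ?p = "inv_into X (F n) y0"
    have p: "?p \<in> X" "F n ?p = y0"
      using F(1)[of n] y0 by (auto simp: bij_betw_def inv_into_into f_inv_into_f)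
    obtain g where g: "bij_betw g X X" "g base = ?p" "\<forall>a\<in>X. \<forall>b\<in>X. d (g a) (g b) = d a b"
      using transitive_isometries[OF p(1)] by blast
    show ?thesis
      using bij_betw_trans[OF g(1) F(1)] bi_lipschitz_comp_isometry[OF F(2) g(1,3)] g(2) p(2)
      by (intro exI[of _ "F n \<circ> g"]) simp
  qed
  then obtain G where G: "\<And>n. bij_betw (G n) X Y"
      "\<And>n. bi_lipschitz (1 + inverse (real (Suc n))) (G n) X d dY" "\<And>n. G n base = y0"
    by metis
  have "almost_isometry_sequence X d base Y dY G y0"
    by (intro almost_isometry_sequence.intro homogeneous_proper_space_axioms Y
        almost_isometry_sequence_axioms.intro G)
  then show ?thesis
    by (rule that)
qed

theorem almost_isometry_unique: "almost_isometry_unique TYPE('b) X d"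
  unfolding almost_isometry_unique_def
proof (intro allI impI, elim conjE)
  fix Y :: "'b set" and dY
  assume "Metric_space Y dY" "almost_isometric X d Y dY"
  then obtain G y0 where "almost_isometry_sequence X d base Y dY G y0"
    by (rule normalized_almost_isometries)
  then interpret almost_isometry_sequence X d base Y dY G y0 .
  obtain P where "almost_isometry_limit X d base Y dY G y0 P"
    by (rule almost_isometry_limit_exists)
  then interpret almost_isometry_limit X d base Y dY G y0 P .
  show "isometric X d Y dY"
    unfolding isometric_def using P_bij P_dist by blast
qed

end

section \<open>Euclidean and hyperbolic space\<close>

lemma homogeneous_proper_spaceI:
  fixes X :: "'a::metric_space set" and K :: "real \<Rightarrow> 'a set"
  assumes "base \<in> X" "\<And>x. x \<in> X \<Longrightarrow> d x x = 0"
    and "\<And>p. p \<in> X \<Longrightarrow> \<exists>g. bij_betw g X X \<and> g base = p \<and> (\<forall>a\<in>X. \<forall>b\<in>X. d (g a) (g b) = d a b)"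
    and K_compact: "\<And>r. compact (K r)" and K_subset: "\<And>r. K r \<subseteq> X"
    and K_covers: "\<And>r x. x \<in> X \<Longrightarrow> d base x \<le> r \<Longrightarrow> x \<in> K r"
    and K_uniform: "\<And>r e. 0 < e \<Longrightarrow> \<exists>\<delta>>0. \<forall>a\<in>K r. \<forall>z\<in>K r. dist a z < \<delta> \<longrightarrow> d a z < e"
  shows "homogeneous_proper_space X d base"
proof
  fix s :: "nat \<Rightarrow> 'a" and r :: real
  assume "\<And>n. s n \<in> X" "\<And>n. d base (s n) \<le> r"
  then have sK: "\<forall>n. s n \<in> K r"
    using K_covers by blast
  obtain l and \<sigma> :: "nat \<Rightarrow> nat" where l: "l \<in> K r" "strict_mono \<sigma>" "(s \<circ> \<sigma>) \<longlonglongrightarrow> l"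
    using seq_compactE[OF compact_imp_seq_compact[OF K_compact] sK] by blast
  have "\<exists>N. \<forall>n\<ge>N. d (s (\<sigma> n)) l < e" if "0 < e" for e
  proof -
    obtain \<delta> where \<delta>: "0 < \<delta>" "\<forall>a\<in>K r. \<forall>z\<in>K r. dist a z < \<delta> \<longrightarrow> d a z < e"
      using K_uniform \<open>0 < e\<close> by blast
    obtain N where N: "\<forall>n\<ge>N. dist (s (\<sigma> n)) l < \<delta>"
      using l(3) \<delta>(1) unfolding lim_sequentially by auto
    then show ?thesis
      using \<delta>(2) sK l(1) by blast
  qed
  then show "\<exists>x\<in>X. \<exists>\<sigma>::nat\<Rightarrow>nat. strict_mono \<sigma> \<and> (\<forall>e>0. \<exists>N. \<forall>n\<ge>N. d (s (\<sigma> n)) x < e)"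
    using l(1,2) K_subset by blast
next
  fix e r :: real
  assume "0 < e"
  then obtain \<delta> where \<delta>: "0 < \<delta>" "\<forall>a\<in>K r. \<forall>z\<in>K r. dist a z < \<delta> \<longrightarrow> d a z < e"
    using K_uniform by blast
  obtain F where F: "finite F" "F \<subseteq> K r" "K r \<subseteq> (\<Union>a\<in>F. ball a \<delta>)"
    using seq_compact_imp_totally_bounded[OF compact_imp_seq_compact[OF K_compact], rule_format, OF \<delta>(1)]
    by metis
  have "\<exists>a\<in>F. d a x < e" if "x \<in> X" "d base x \<le> r" for x
  proof -
    have "x \<in> K r"
      using K_covers that by blast
    then obtain a where "a \<in> F" "dist a x < \<delta>"
      using F(3) by auto
    then show ?thesis
      using \<delta>(2) F(2) \<open>x \<in> K r\<close> by blast
  qed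
  then show "\<exists>F. finite F \<and> F \<subseteq> X \<and> (\<forall>x\<in>X. d base x \<le> r \<longrightarrow> (\<exists>a\<in>F. d a x < e))"
    using F(1,2) K_subset by blast
qed (fact assms)+

lemma euclidean_homogeneous_proper_space:
  "homogeneous_proper_space (UNIV :: 'a::{real_normed_vector,heine_borel} set) dist 0"
proof (rule homogeneous_proper_spaceI[where K = "cball 0"])
  fix p :: 'a
  have bij: "bij_betw (\<lambda>x. x + p) UNIV UNIV"
    by (rule bij_betw_byWitness[where f' = "\<lambda>x. x - p"]) auto
  show "\<exists>g :: 'a \<Rightarrow> 'a. bij_betw g UNIV UNIV \<and> g 0 = p \<and> (\<forall>a\<in>UNIV. \<forall>b\<in>UNIV. dist (g a) (g b) = dist a b)"
    by (rule exI[of _ "\<lambda>x. x + p"]) (simp add: bij)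
next
  fix e :: real
  assume "0 < e"
  then show "\<exists>\<delta>>0. \<forall>a\<in>cball 0 r. \<forall>z\<in>cball 0 r. dist a z < \<delta> \<longrightarrow> dist a z < e" for r :: real
    by blast
qed auto

text \<open>Moebius addition a \<oplus> x on the unit ball; x \<mapsto> a \<oplus> x is a hyperbolic isometry of the
  ball sending 0 to a.\<close>

definition mobius_denom :: "'a::real_inner \<Rightarrow> 'a \<Rightarrow> real" where
  "mobius_denom a x = 1 + 2 * inner a x + inner a a * inner x x"

definition mobius_numer :: "'a::real_inner \<Rightarrow> 'a \<Rightarrow> 'a" where
  "mobius_numer a x = (1 - inner a a) *\<^sub>R x + (1 + 2 * inner a x + inner x x) *\<^sub>R a"

definition mobius_add :: "'a::real_inner \<Rightarrow> 'a \<Rightarrow> 'a" where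
  "mobius_add a x = inverse (mobius_denom a x) *\<^sub>R mobius_numer a x"

lemma mobius_denom_scaleR_mobius_add:
  "mobius_denom a x \<noteq> 0 \<Longrightarrow> mobius_denom a x *\<^sub>R mobius_add a x = mobius_numer a x"
  by (simp add: mobius_add_def)

lemma one_minus_inner_mobius_add:
  fixes a x :: "'a::real_inner"
  assumes "mobius_denom a x \<noteq> 0"
  shows "1 - inner (mobius_add a x) (mobius_add a x)
       = (1 - inner a a) * (1 - inner x x) / mobius_denom a x"
proof -
  let ?D = "mobius_denom a x" and ?m = "inner (mobius_add a x) (mobius_add a x)"
  have "?D * (?D * (1 - ?m)) = ?D\<^sup>2 - inner (mobius_numer a x) (mobius_numer a x)"
    unfolding mobius_denom_scaleR_mobius_add[OF assms, symmetric]
    by (simp add: algebra_simps power2_eq_square)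
  also have "\<dots> = ?D * ((1 - inner a a) * (1 - inner x x))"
    unfolding mobius_numer_def mobius_denom_def
    by (simp add: inner_add_left inner_add_right inner_commute power2_eq_square) algebra
  finally have "(1 - ?m) * ?D = (1 - inner a a) * (1 - inner x x)"
    using assms by (simp add: mult.commute)
  then show ?thesis
    using assms by (rule eq_divide_imp[rotated])
qed

lemma inner_diff_mobius_add:
  fixes a x y :: "'a::real_inner"
  assumes "mobius_denom a x \<noteq> 0" "mobius_denom a y \<noteq> 0"
  shows "inner (mobius_add a x - mobius_add a y) (mobius_add a x - mobius_add a y)
     = (1 - inner a a)\<^sup>2 * inner (x - y) (x - y) / (mobius_denom a x * mobius_denom a y)"
proof -
  let ?Dx = "mobius_denom a x" and ?Dy = "mobius_denom a y"
  let ?u = "?Dy *\<^sub>R mobius_numer a x - ?Dx *\<^sub>R mobius_numer a y"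
  have "?u = (?Dx * ?Dy) *\<^sub>R (mobius_add a x - mobius_add a y)"
    using assms
    by (simp add: mobius_denom_scaleR_mobius_add[symmetric] scaleR_diff_right mult.commute)
  then have "(?Dx * ?Dy) * ((?Dx * ?Dy) *
      inner (mobius_add a x - mobius_add a y) (mobius_add a x - mobius_add a y)) = inner ?u ?u"
    by simp
  also have "\<dots> = (?Dx * ?Dy) * ((1 - inner a a)\<^sup>2 * inner (x - y) (x - y))"
    unfolding mobius_numer_def mobius_denom_def
    by (simp add: inner_add_left inner_add_right inner_diff_left inner_diff_right inner_commute
        power2_eq_square) algebra
  finally show ?thesis
    using assms by (simp add: field_simps)
qed

lemma mobius_denom_pos:
  fixes a x :: "'a::real_inner"
  assumes "norm a < 1" "norm x < 1"
  shows "0 < mobius_denom a x"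
proof -
  define t where "t = norm a * norm x"
  have "norm a * norm x \<le> norm a * 1" by (rule mult_left_mono) (use assms in auto)
  then have t: "0 \<le> t" "t < 1" using assms unfolding t_def by auto
  have "\<bar>inner a x\<bar> \<le> t" unfolding t_def by (rule Cauchy_Schwarz_ineq2)
  moreover have "inner a a * inner x x = t\<^sup>2"
    unfolding t_def by (simp add: power2_norm_eq_inner[symmetric] power_mult_distrib)
  moreover have "0 < (1 - t)\<^sup>2" using t by simp
  ultimately show ?thesis unfolding mobius_denom_def by (simp add: power2_eq_square algebra_simps)
qed

lemma inner_self_less_1: "norm (x::'a::real_inner) < 1 \<Longrightarrow> inner x x < 1"
  by (simp add: power2_norm_eq_inner[symmetric] abs_square_less_1)

lemma mobius_add_neg_cancel_left:
  fixes a x :: "'a::real_inner"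
  assumes "norm a < 1" "norm x < 1"
  shows "mobius_add a (mobius_add (-a) x) = x"
proof -
  let ?A = "inner a a" and ?y = "mobius_add (-a) x" and ?n = "mobius_numer (-a) x"
  let ?D = "mobius_denom (-a) x" and ?E = "mobius_denom a (mobius_add (-a) x)"
  have D: "0 < ?D" using mobius_denom_pos[of "-a" x] assms by simp
  have y: "?D *\<^sub>R ?y = ?n" using D by (simp add: mobius_denom_scaleR_mobius_add)
  \<comment> \<open>The denominator of a \<oplus> y is (1 - |a|^2)^2 / D and its numerator reduces to a multiple of x.\<close>
  have ay: "?D * inner a ?y = inner a ?n" and yy: "?D * (?D * inner ?y ?y) = inner ?n ?n"
    unfolding y[symmetric] by simp_all
  have "?D * (?D * ?E) = ?D\<^sup>2 + 2 * ?D * inner a ?n + ?A * inner ?n ?n"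
    unfolding mobius_denom_def ay[symmetric] yy[symmetric] by (simp add: algebra_simps power2_eq_square)
  also have "\<dots> = ?D * (1 - ?A)\<^sup>2"
    unfolding mobius_numer_def mobius_denom_def
    by (simp add: inner_add_left inner_add_right inner_diff_left inner_diff_right inner_commute
        power2_eq_square) algebra
  finally have E: "?D * ?E = (1 - ?A)\<^sup>2" using D by simp
  have "?D * (?D * (1 + 2 * inner a ?y + inner ?y ?y)) = ?D\<^sup>2 + 2 * ?D * inner a ?n + inner ?n ?n"
    unfolding ay[symmetric] yy[symmetric] by (simp add: algebra_simps power2_eq_square)
  also have "\<dots> = ?D * ((1 - ?A) * (1 + 2 * inner (-a) x + inner x x))"
    unfolding mobius_numer_def mobius_denom_def
    by (simp add: inner_add_left inner_add_right inner_diff_left inner_diff_right inner_commute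
        power2_eq_square) algebra
  finally have B: "?D * (1 + 2 * inner a ?y + inner ?y ?y) = (1 - ?A) * (1 + 2 * inner (-a) x + inner x x)"
    using D by simp
  have "0 < (1 - ?A)\<^sup>2" using inner_self_less_1[OF assms(1)] by simp
  then have E0: "?E \<noteq> 0" using E by auto
  have "(?D * ?E) *\<^sub>R mobius_add a ?y = ?D *\<^sub>R mobius_numer a ?y"
    using E0 by (simp flip: mobius_denom_scaleR_mobius_add)
  also have "\<dots> = (1 - ?A) *\<^sub>R (?D *\<^sub>R ?y) + (?D * (1 + 2 * inner a ?y + inner ?y ?y)) *\<^sub>R a"
    by (simp add: mobius_numer_def[of a ?y] algebra_simps)
  also have "\<dots> = (?D * ?E) *\<^sub>R x"
    unfolding y B E mobius_numer_def by (simp add: algebra_simps power2_eq_square)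
      (metis mult_2_right scaleR_add_left)
  finally show ?thesis
    using D E0 by simp
qed

lemma norm_mobius_add_less_1:
  fixes a x :: "'a::real_inner"
  assumes "norm a < 1" "norm x < 1"
  shows "norm (mobius_add a x) < 1"
proof -
  have "0 < (1 - inner a a) * (1 - inner x x) / mobius_denom a x"
    using inner_self_less_1[OF assms(1)] inner_self_less_1[OF assms(2)] mobius_denom_pos[OF assms]
    by simp
  then have "inner (mobius_add a x) (mobius_add a x) < 1"
    using one_minus_inner_mobius_add[of a x] mobius_denom_pos[OF assms] by simp
  then show ?thesis
    by (simp add: power2_norm_eq_inner[symmetric] abs_square_less_1)
qed

lemma mobius_add_zero_right [simp]: "mobius_add a 0 = a"
  by (simp add: mobius_add_def mobius_numer_def mobius_denom_def)

lemma bij_betw_mobius_add: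
  fixes a :: "'a::real_inner"
  assumes "norm a < 1"
  shows "bij_betw (mobius_add a) (ball 0 1) (ball 0 1)"
proof (rule bij_betw_byWitness[where f' = "mobius_add (-a)"])
  show "\<forall>x\<in>ball 0 1. mobius_add (-a) (mobius_add a x) = x"
    using mobius_add_neg_cancel_left[of "-a"] assms by simp
  show "\<forall>x\<in>ball 0 1. mobius_add a (mobius_add (-a) x) = x"
    using mobius_add_neg_cancel_left[of a] assms by simp
  show "mobius_add a ` ball 0 1 \<subseteq> ball 0 1" "mobius_add (-a) ` ball 0 1 \<subseteq> ball 0 1"
    using norm_mobius_add_less_1[of a] norm_mobius_add_less_1[of "-a"] assms by auto
qed

lemma hyperbolic_dist_inner:
  "hyperbolic_dist x y = arcosh (1 + 2 * inner (x - y) (x - y) / ((1 - inner x x) * (1 - inner y y)))"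
  unfolding hyperbolic_dist_def by (simp add: power2_norm_eq_inner)

lemma hyperbolic_dist_self [simp]: "hyperbolic_dist x x = 0"
  by (simp add: hyperbolic_dist_def)

lemma hyperbolic_dist_mobius_add:
  fixes a x y :: "real ^ 'n"
  assumes "norm a < 1" "norm x < 1" "norm y < 1"
  shows "hyperbolic_dist (mobius_add a x) (mobius_add a y) = hyperbolic_dist x y"
proof -
  have D: "0 < mobius_denom a x" "0 < mobius_denom a y"
    using mobius_denom_pos assms by blast+
  then have D0: "mobius_denom a x \<noteq> 0" "mobius_denom a y \<noteq> 0"
    by simp_all
  have pos: "0 < 1 - inner a a" "0 < 1 - inner x x" "0 < 1 - inner y y"
    using inner_self_less_1 assms by auto
  have cancel: "2 * (\<alpha>\<^sup>2 * q / (Dx * Dy)) / (\<alpha> * \<beta> / Dx * (\<alpha> * \<gamma> / Dy)) = 2 * q / (\<beta> * \<gamma>)"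
    if "0 < \<alpha>" "0 < \<beta>" "0 < \<gamma>" "0 < Dx" "0 < Dy" for \<alpha> \<beta> \<gamma> Dx Dy q :: real
    using that by (simp add: field_simps power2_eq_square)
  show ?thesis
    unfolding hyperbolic_dist_inner inner_diff_mobius_add[OF D0] one_minus_inner_mobius_add[OF D0(1)]
      one_minus_inner_mobius_add[OF D0(2)] cancel[OF pos D] ..
qed

lemma norm_le_of_hyperbolic_dist_0_le:
  fixes x :: "real ^ 'n"
  assumes "norm x < 1" "hyperbolic_dist 0 x \<le> r"
  shows "norm x \<le> sqrt ((cosh r - 1) / (cosh r + 1))"
proof -
  let ?X = "inner x x"
  have X: "0 \<le> ?X" "?X < 1"
    using inner_self_less_1[OF assms(1)] by auto
  define t where "t = 1 + 2 * ?X / (1 - ?X)"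
  have t: "1 \<le> t"
    using X unfolding t_def by simp
  have "arcosh t \<le> r"
    using assms(2) unfolding hyperbolic_dist_inner t_def by simp
  moreover have "0 \<le> arcosh t"
    using t by simp
  ultimately have "cosh (arcosh t) \<le> cosh r"
    by (subst cosh_real_nonneg_le_iff) auto
  then have "t \<le> cosh r"
    using t by simp
  then have "?X * (cosh r + 1) \<le> cosh r - 1"
    using X unfolding t_def by (simp add: field_simps)
  moreover have "0 < cosh r + 1"
    using cosh_real_ge_1[of r] by linarith
  ultimately have "?X \<le> (cosh r - 1) / (cosh r + 1)"
    by (simp add: field_simps)
  then show ?thesis
    by (simp add: norm_eq_sqrt_inner)
qed

lemma hyperbolic_dist_uniformly_small:
  assumes "0 \<le> \<rho>" "\<rho> < 1" "0 < e"
  shows "\<exists>\<delta>>0. \<forall>a\<in>cball (0 :: real ^ 'n) \<rho>. \<forall>z\<in>cball 0 \<rho>. dist a z < \<delta> \<longrightarrow> hyperbolic_dist a z < e"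
proof -
  define c where "c = 1 - \<rho>\<^sup>2"
  have c: "0 < c"
    using assms(1,2) by (simp add: c_def abs_square_less_1)
  have ce: "1 < cosh e"
    using cosh_real_nonneg_less_iff[of 0 e] assms(3) by simp
  define \<delta> where "\<delta> = c * sqrt ((cosh e - 1) / 2)"
  have "0 < \<delta>"
    using c ce by (simp add: \<delta>_def)
  moreover have "hyperbolic_dist a z < e"
    if "norm a \<le> \<rho>" "norm z \<le> \<rho>" "dist a z < \<delta>" for a z :: "real ^ 'n"
  proof -
    let ?q = "2 * inner (a - z) (a - z) / ((1 - inner a a) * (1 - inner z z))"
    have "(norm a)\<^sup>2 \<le> \<rho>\<^sup>2" "(norm z)\<^sup>2 \<le> \<rho>\<^sup>2"
      using that(1,2) by (simp_all add: power_mono)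
    then have "inner a a \<le> \<rho>\<^sup>2" "inner z z \<le> \<rho>\<^sup>2"
      by (simp_all add: power2_norm_eq_inner)
    then have ca: "c \<le> 1 - inner a a" "c \<le> 1 - inner z z"
      by (simp_all add: c_def)
    then have prod: "c\<^sup>2 \<le> (1 - inner a a) * (1 - inner z z)"
      unfolding power2_eq_square using c by (intro mult_mono) auto
    have prod_pos: "0 < (1 - inner a a) * (1 - inner z z)"
      using ca c by (intro mult_pos_pos) auto
    have "(dist a z)\<^sup>2 < \<delta>\<^sup>2"
      using that(3) by (simp add: power_strict_mono)
    also have "\<delta>\<^sup>2 = c\<^sup>2 * ((cosh e - 1) / 2)"
      using ce by (simp add: \<delta>_def power_mult_distrib)
    finally have close: "2 * inner (a - z) (a - z) < c\<^sup>2 * (cosh e - 1)"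
      by (simp add: dist_norm power2_norm_eq_inner)
    have "?q \<le> 2 * inner (a - z) (a - z) / c\<^sup>2"
      using prod prod_pos c by (intro divide_left_mono) auto
    also have "\<dots> < cosh e - 1"
      using close c by (simp add: pos_divide_less_eq mult.commute)
    finally have "?q < cosh e - 1" .
    moreover have "0 \<le> ?q"
      using prod_pos by (intro divide_nonneg_pos) auto
    ultimately have "arcosh (1 + ?q) < arcosh (cosh e)"
      using ce by simp
    then show ?thesis
      unfolding hyperbolic_dist_inner using assms(3) by (simp add: arcosh_cosh_real)
  qed
  ultimately show ?thesis
    by auto
qed

lemma hyperbolic_homogeneous_proper_space:
  "homogeneous_proper_space (hyperbolic_space :: (real ^ 'n) set) hyperbolic_dist 0"
proof -
  \<comment> \<open>tanh (r / 2), the Euclidean radius of the hyperbolic ball of radius r about 0\<close>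
  define \<rho> where "\<rho> r = sqrt ((cosh r - 1) / (cosh r + 1))" for r :: real
  have \<rho>: "0 \<le> \<rho> r" "\<rho> r < 1" for r
    using cosh_real_ge_1[of r] by (simp_all add: \<rho>_def divide_nonneg_pos)
  show ?thesis
  proof (rule homogeneous_proper_spaceI[where K = "\<lambda>r. cball 0 (\<rho> r)"])
    fix p :: "real ^ 'n"
    assume "p \<in> hyperbolic_space"
    then have p: "norm p < 1"
      by (simp add: hyperbolic_space_def)
    show "\<exists>g :: real ^ 'n \<Rightarrow> real ^ 'n. bij_betw g hyperbolic_space hyperbolic_space \<and> g 0 = p \<and>
        (\<forall>a\<in>hyperbolic_space. \<forall>b\<in>hyperbolic_space. hyperbolic_dist (g a) (g b) = hyperbolic_dist a b)"
      unfolding hyperbolic_space_def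
      by (rule exI[of _ "mobius_add p"])
        (simp add: bij_betw_mobius_add[OF p] hyperbolic_dist_mobius_add[OF p])
  next
    show "cball 0 (\<rho> r) \<subseteq> hyperbolic_space" for r
      using \<rho>(2)[of r] by (auto simp: hyperbolic_space_def)
  next
    show "x \<in> cball 0 (\<rho> r)" if "x \<in> hyperbolic_space" "hyperbolic_dist 0 x \<le> r" for x r
      using norm_le_of_hyperbolic_dist_0_le[of x r] that by (simp add: hyperbolic_space_def \<rho>_def)
  next
    show "\<exists>\<delta>>0. \<forall>a\<in>cball 0 (\<rho> r). \<forall>z\<in>cball 0 (\<rho> r). dist a z < \<delta> \<longrightarrow> hyperbolic_dist a z < e"
      if "0 < e" for r e
      using hyperbolic_dist_uniformly_small[OF \<rho> that] .
  qed (simp_all add: hyperbolic_space_def)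
qed

theorem corollary3p2:
  shows "almost_isometry_unique TYPE('b) (UNIV :: (real ^ 'n) set) dist
       \<and> almost_isometry_unique TYPE('c) (hyperbolic_space :: (real ^ 'n) set) hyperbolic_dist"
  using homogeneous_proper_space.almost_isometry_unique[OF euclidean_homogeneous_proper_space]
    homogeneous_proper_space.almost_isometry_unique[OF hyperbolic_homogeneous_proper_space]
  by blast

end
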